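(* Let $M,K\in\mathbb{R}^{m\times m}$ be symmetric positive semidefinite matrices with at least one of them positive definite, and let $\nu,\omega,\theta,H_1,H_2,R,P_\alpha$ be as defined in the context. Then $\rho(P_\alpha)<1$ for every $\alpha>0$, i.e. the MBAS iteration converges unconditionally.
   Context: $\nu>0$, $\omega>0$, $\theta=1+\nu\omega^2$, $I$ is the $m\times m$ identity, $H_1=\begin{pmatrix} M&0\\0&M\end{pmatrix}$, $H_2=\begin{pmatrix} K&0\\0&K\end{pmatrix}$, $R=\frac{1}{\sqrt{\nu\theta}}\begin{pmatrix} -i\omega\nu I & \sqrt{\nu} I\\ -\sqrt{\nu} I & i\omega\nu I\end{pmatrix}$, and for $\alpha>0$, $P_\alpha=(\alpha I_{2m}+\sqrt{\nu\theta}H_2)^{-1}(\alpha I_{2m}+\theta RH_1)(\alpha I_{2m}+\theta H_1)^{-1}(\alpha I_{2m}-\sqrt{\nu\theta}RH_2)$. $\rho(\cdot)$ denotes spectral radius. *)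

theory Defs
  imports "Jordan_Normal_Form.Spectral_Radius" "Jordan_Normal_Form.Gauss_Jordan_Elimination"
begin

definition sym_psd_mat :: "nat \<Rightarrow> real mat \<Rightarrow> bool" where
  "sym_psd_mat m A \<longleftrightarrow> A \<in> carrier_mat m m \<and> transpose_mat A = A \<and>
     (\<forall>x \<in> carrier_vec m. 0 \<le> x \<bullet> (A *\<^sub>v x))"

definition sym_pd_mat :: "nat \<Rightarrow> real mat \<Rightarrow> bool" where
  "sym_pd_mat m A \<longleftrightarrow> A \<in> carrier_mat m m \<and> transpose_mat A = A \<and>
     (\<forall>x \<in> carrier_vec m. x \<noteq> 0\<^sub>v m \<longrightarrow> 0 < x \<bullet> (A *\<^sub>v x))"

text \<open>Matrix inverse (meaningful for invertible square matrices).\<close>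
definition minv :: "complex mat \<Rightarrow> complex mat" where
  "minv A = the (mat_inverse A)"

definition theta :: "real \<Rightarrow> real \<Rightarrow> real" where
  "theta \<nu> \<omega> = 1 + \<nu> * \<omega>^2"

definition blkdiag :: "nat \<Rightarrow> real mat \<Rightarrow> complex mat" where
  "blkdiag m A = four_block_mat (map_mat complex_of_real A) (0\<^sub>m m m) (0\<^sub>m m m) (map_mat complex_of_real A)"

definition Rmat :: "nat \<Rightarrow> real \<Rightarrow> real \<Rightarrow> complex mat" where
  "Rmat m \<nu> \<omega> = complex_of_real (1 / sqrt (\<nu> * theta \<nu> \<omega>)) \<cdot>\<^sub>m
     four_block_mat ((- \<i> * complex_of_real (\<omega> * \<nu>)) \<cdot>\<^sub>m 1\<^sub>m m) (complex_of_real (sqrt \<nu>) \<cdot>\<^sub>m 1\<^sub>m m)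
                    ((- complex_of_real (sqrt \<nu>)) \<cdot>\<^sub>m 1\<^sub>m m) ((\<i> * complex_of_real (\<omega> * \<nu>)) \<cdot>\<^sub>m 1\<^sub>m m)"

definition Palpha :: "nat \<Rightarrow> real \<Rightarrow> real \<Rightarrow> real mat \<Rightarrow> real mat \<Rightarrow> real \<Rightarrow> complex mat" where
  "Palpha m \<nu> \<omega> M K \<alpha> =
     (let \<theta> = theta \<nu> \<omega>; a = complex_of_real \<alpha>; I2 = 1\<^sub>m (2*m);
          H1 = blkdiag m M; H2 = blkdiag m K; R = Rmat m \<nu> \<omega>;
          s = complex_of_real (sqrt (\<nu> * \<theta>)); t = complex_of_real \<theta> in
      minv (a \<cdot>\<^sub>m I2 + s \<cdot>\<^sub>m H2) * (a \<cdot>\<^sub>m I2 + t \<cdot>\<^sub>m (R * H1)) *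
      minv (a \<cdot>\<^sub>m I2 + t \<cdot>\<^sub>m H1) * (a \<cdot>\<^sub>m I2 - s \<cdot>\<^sub>m (R * H2)))"

end

(*
  Write A = \<alpha> I + s H2, B = \<alpha> I + t H1, X = \<alpha> I + t R H1 and Y = \<alpha> I - s R H2 with
  s = sqrt (\<nu> \<theta>) and t = \<theta>, so that P = A^-1 X B^-1 Y.  Since R is skew-Hermitian with R^2 = -I
  and commutes with the Hermitian H1, H2, the cross terms in |X w|^2 and |Y v|^2 vanish, whereas
  |B w|^2 and |A v|^2 carry the extra terms 2 \<alpha> t Re <H1 w, w> and 2 \<alpha> s Re <H2 v, v>.
  For an eigenpair P v = \<lambda> v put w = B^-1 Y v; then X w = \<lambda> A v and B w = Y v, and comparing
  the four norms gives
    |\<lambda>|^2 |A v|^2 = |A v|^2 - 2 \<alpha> s Re <H2 v, v> - 2 \<alpha> t Re <H1 w, w>.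
  Both subtracted terms are nonnegative, and one of them is positive because H1 or H2 is
  positive definite (w \<noteq> 0 since |Y v| \<ge> \<alpha> |v|); hence |\<lambda>| < 1.
*)

theory Submission
  imports Defs "Jordan_Normal_Form.Schur_Decomposition"
begin

section \<open>Adjoints and the complex norm\<close>

lemma mat_adjoint_dim [simp]:
  "dim_row (mat_adjoint A) = dim_col A" "dim_col (mat_adjoint A) = dim_row A"
  by (simp_all add: mat_adjoint_def)

lemma mat_adjoint_index [simp]:
  "i < dim_col A \<Longrightarrow> j < dim_row A \<Longrightarrow> mat_adjoint (A :: complex mat) $$ (i, j) = cnj (A $$ (j, i))"
  by (simp add: mat_adjoint_def mat_of_rows_def)

lemma cscalar_prod_mult_mat_vec_left:
  assumes A: "(A :: complex mat) \<in> carrier_mat nr nc"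
    and u: "u \<in> carrier_vec nc" and v: "v \<in> carrier_vec nr"
  shows "(A *\<^sub>v u) \<bullet>c v = u \<bullet>c (mat_adjoint A *\<^sub>v v)"
proof -
  have "(A *\<^sub>v u) \<bullet>c v = (\<Sum>i<nr. \<Sum>j<nc. A $$ (i,j) * u $ j * cnj (v $ i))"
    using A u v by (simp add: scalar_prod_def row_def lessThan_atLeast0 sum_distrib_right)
  also have "\<dots> = (\<Sum>j<nc. \<Sum>i<nr. A $$ (i,j) * u $ j * cnj (v $ i))"
    by (rule sum.swap)
  also have "\<dots> = u \<bullet>c (mat_adjoint A *\<^sub>v v)"
    using A u v by (simp add: scalar_prod_def row_def lessThan_atLeast0 sum_distrib_left ac_simps)
  finally show ?thesis .
qed

lemma cscalar_prod_swap:
  "u \<in> carrier_vec n \<Longrightarrow> v \<in> carrier_vec n \<Longrightarrow> u \<bullet>c v = cnj (v \<bullet>c (u :: complex vec))"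
  by (simp add: scalar_prod_def mult.commute)

definition sq_norm_vec :: "complex vec \<Rightarrow> real" where
  "sq_norm_vec v = Re (v \<bullet>c v)"

lemma sq_norm_vec_nonneg: "0 \<le> sq_norm_vec v"
  unfolding sq_norm_vec_def using conjugate_square_ge_0_vec[of v] by (simp add: less_eq_complex_def)

lemma sq_norm_vec_pos: "v \<in> carrier_vec n \<Longrightarrow> v \<noteq> 0\<^sub>v n \<Longrightarrow> 0 < sq_norm_vec v"
  unfolding sq_norm_vec_def using conjugate_square_greater_0_vec[of v n] by (simp add: less_complex_def)

lemma sq_norm_vec_smult: "sq_norm_vec (k \<cdot>\<^sub>v v) = (cmod k)\<^sup>2 * sq_norm_vec v"
proof -
  have "(k \<cdot>\<^sub>v v) \<bullet>c (k \<cdot>\<^sub>v v) = (k * cnj k) * (v \<bullet>c v)"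
    by (simp add: scalar_prod_def sum_distrib_left algebra_simps)
  then show ?thesis unfolding sq_norm_vec_def by (simp add: complex_mult_cnj cmod_power2)
qed

lemma sq_norm_vec_lincomb:
  assumes u: "u \<in> carrier_vec n" and z: "z \<in> carrier_vec n"
  shows "sq_norm_vec (complex_of_real a \<cdot>\<^sub>v u + complex_of_real b \<cdot>\<^sub>v z)
    = a\<^sup>2 * sq_norm_vec u + 2 * a * b * Re (z \<bullet>c u) + b\<^sup>2 * sq_norm_vec z"
proof -
  let ?w = "complex_of_real a \<cdot>\<^sub>v u + complex_of_real b \<cdot>\<^sub>v z"
  have Re_sum_form: "Re (x \<bullet>c y) = (\<Sum>i<n. Re (x $ i * cnj (y $ i)))"
    if "x \<in> carrier_vec n" "y \<in> carrier_vec n" for x y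
    using that by (simp add: scalar_prod_def lessThan_atLeast0 Re_sum)
  have pointwise: "Re ((complex_of_real a * x + complex_of_real b * y) * cnj (complex_of_real a * x + complex_of_real b * y))
      = a\<^sup>2 * Re (x * cnj x) + 2 * a * b * Re (y * cnj x) + b\<^sup>2 * Re (y * cnj y)" for x y
    by (simp add: algebra_simps power2_eq_square)
  have "sq_norm_vec ?w = (\<Sum>i<n. Re (?w $ i * cnj (?w $ i)))"
    unfolding sq_norm_vec_def using u z by (intro Re_sum_form) auto
  also have "\<dots> = (\<Sum>i<n. a\<^sup>2 * Re (u $ i * cnj (u $ i)) + 2 * a * b * Re (z $ i * cnj (u $ i))
      + b\<^sup>2 * Re (z $ i * cnj (z $ i)))"
    using u z by (intro sum.cong) (simp_all only: pointwise index_add_vec index_smult_vec lessThan_iff carrier_vecD)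
  also have "\<dots> = a\<^sup>2 * sq_norm_vec u + 2 * a * b * Re (z \<bullet>c u) + b\<^sup>2 * sq_norm_vec z"
    unfolding sq_norm_vec_def Re_sum_form[OF u u] Re_sum_form[OF z u] Re_sum_form[OF z z]
    by (simp only: sum.distrib sum_distrib_left)
  finally show ?thesis .
qed

lemma smult_mult_mat_vec:
  "A \<in> carrier_mat nr nc \<Longrightarrow> v \<in> carrier_vec nc \<Longrightarrow> (k \<cdot>\<^sub>m A) *\<^sub>v v = k \<cdot>\<^sub>v (A *\<^sub>v (v :: complex vec))"
  by (rule eq_vecI) (auto simp: mult_mat_vec_def scalar_prod_def sum_distrib_left mult.assoc)

lemma shift_mult_mat_vec:
  assumes "H \<in> carrier_mat n n" "v \<in> carrier_vec n"
  shows "(complex_of_real a \<cdot>\<^sub>m 1\<^sub>m n + complex_of_real c \<cdot>\<^sub>m H) *\<^sub>v v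
    = complex_of_real a \<cdot>\<^sub>v v + complex_of_real c \<cdot>\<^sub>v (H *\<^sub>v v)"
  using assms by (subst add_mult_distrib_mat_vec[of _ n n]) (auto simp: smult_mult_mat_vec)

lemma sq_norm_vec_shift:
  assumes "H \<in> carrier_mat n n" "v \<in> carrier_vec n"
  shows "sq_norm_vec ((complex_of_real a \<cdot>\<^sub>m 1\<^sub>m n + complex_of_real c \<cdot>\<^sub>m H) *\<^sub>v v)
    = a\<^sup>2 * sq_norm_vec v + 2 * a * c * Re ((H *\<^sub>v v) \<bullet>c v) + c\<^sup>2 * sq_norm_vec (H *\<^sub>v v)"
  using assms by (simp add: shift_mult_mat_vec sq_norm_vec_lincomb)

text \<open>\<open>R H\<close> is skew-adjoint, so the cross term \<open>Re <R H v, v>\<close> vanishes, and \<open>R\<close> is unitary,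
  so \<open>|R H v| = |H v|\<close>.\<close>

lemma sq_norm_vec_shift_skew:
  assumes R: "R \<in> carrier_mat n n" and H: "H \<in> carrier_mat n n" and v: "v \<in> carrier_vec n"
    and R_skew: "mat_adjoint R = - R" and R_square: "R * R = - 1\<^sub>m n"
    and H_herm: "mat_adjoint H = H" and comm: "R * H = H * R"
  shows "sq_norm_vec ((complex_of_real a \<cdot>\<^sub>m 1\<^sub>m n + complex_of_real c \<cdot>\<^sub>m (R * H)) *\<^sub>v v)
    = a\<^sup>2 * sq_norm_vec v + c\<^sup>2 * sq_norm_vec (H *\<^sub>v v)"
proof -
  define w where "w = H *\<^sub>v v"
  define z where "z = R *\<^sub>v w"
  have w: "w \<in> carrier_vec n" and z: "z \<in> carrier_vec n" and Rv: "R *\<^sub>v v \<in> carrier_vec n"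
    using H R v by (simp_all add: w_def z_def)
  have "z \<bullet>c v = - (w \<bullet>c (R *\<^sub>v v))"
    unfolding z_def cscalar_prod_mult_mat_vec_left[OF R w v] R_skew using R v
    by (simp add: scalar_prod_def sum_negf)
  also have "w \<bullet>c (R *\<^sub>v v) = v \<bullet>c z"
    unfolding w_def cscalar_prod_mult_mat_vec_left[OF H v Rv] H_herm z_def
    using H R v by (metis assoc_mult_mat_vec comm)
  also have "v \<bullet>c z = cnj (z \<bullet>c v)"
    by (rule cscalar_prod_swap[OF v z])
  finally have "Re (z \<bullet>c v) = Re (- cnj (z \<bullet>c v))"
    by (rule arg_cong)
  then have "Re (z \<bullet>c v) = 0"
    by simp
  moreover have "z \<bullet>c z = w \<bullet>c w"
  proof -
    have "z \<bullet>c z = - (w \<bullet>c ((R * R) *\<^sub>v w))"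
      unfolding z_def cscalar_prod_mult_mat_vec_left[OF R w z[unfolded z_def]] R_skew using R w
      by (simp add: scalar_prod_def sum_negf)
    then show ?thesis using w by (simp add: R_square scalar_prod_def sum_negf)
  qed
  moreover have "(complex_of_real a \<cdot>\<^sub>m 1\<^sub>m n + complex_of_real c \<cdot>\<^sub>m (R * H)) *\<^sub>v v
      = complex_of_real a \<cdot>\<^sub>v v + complex_of_real c \<cdot>\<^sub>v z"
    using R H v by (simp add: shift_mult_mat_vec z_def w_def)
  ultimately show ?thesis
    using sq_norm_vec_lincomb[OF v z, of a c] by (simp add: sq_norm_vec_def w_def)
qed

lemma sq_norm_vec_shift_skew_ge:
  assumes "R \<in> carrier_mat n n" "H \<in> carrier_mat n n" "v \<in> carrier_vec n"
    and "mat_adjoint R = - R" "R * R = - 1\<^sub>m n" "mat_adjoint H = H" "R * H = H * R"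
  shows "a\<^sup>2 * sq_norm_vec v \<le> sq_norm_vec ((complex_of_real a \<cdot>\<^sub>m 1\<^sub>m n + complex_of_real c \<cdot>\<^sub>m (R * H)) *\<^sub>v v)"
  using sq_norm_vec_shift_skew[OF assms] sq_norm_vec_nonneg[of "H *\<^sub>v v"] by simp

section \<open>Accretive matrices\<close>

definition accretive_mat :: "nat \<Rightarrow> complex mat \<Rightarrow> bool" where
  "accretive_mat n H \<longleftrightarrow> (\<forall>v \<in> carrier_vec n. 0 \<le> Re ((H *\<^sub>v v) \<bullet>c v))"

definition strictly_accretive_mat :: "nat \<Rightarrow> complex mat \<Rightarrow> bool" where
  "strictly_accretive_mat n H \<longleftrightarrow> (\<forall>v \<in> carrier_vec n. v \<noteq> 0\<^sub>v n \<longrightarrow> 0 < Re ((H *\<^sub>v v) \<bullet>c v))"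

lemma sym_pd_mat_imp_sym_psd_mat: "sym_pd_mat n A \<Longrightarrow> sym_psd_mat n A"
  unfolding sym_pd_mat_def sym_psd_mat_def
  by (metis order_le_less scalar_prod_left_zero mult_mat_vec_carrier)

lemma Re_cscalar_prod_of_real_mat:
  assumes A: "A \<in> carrier_mat n n" and u: "u \<in> carrier_vec n"
  shows "Re ((map_mat complex_of_real A *\<^sub>v u) \<bullet>c u)
    = map_vec Re u \<bullet> (A *\<^sub>v map_vec Re u) + map_vec Im u \<bullet> (A *\<^sub>v map_vec Im u)"
proof -
  have "Re ((map_mat complex_of_real A *\<^sub>v u) \<bullet>c u)
      = (\<Sum>i<n. \<Sum>j<n. A $$ (i, j) * Re (u $ j) * Re (u $ i))
      + (\<Sum>i<n. \<Sum>j<n. A $$ (i, j) * Im (u $ j) * Im (u $ i))"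
    using A u by (simp add: scalar_prod_def lessThan_atLeast0 Re_sum sum_distrib_right)
  also have "\<dots> = map_vec Re u \<bullet> (A *\<^sub>v map_vec Re u) + map_vec Im u \<bullet> (A *\<^sub>v map_vec Im u)"
    using A u by (simp add: scalar_prod_def lessThan_atLeast0 sum_distrib_left ac_simps)
  finally show ?thesis .
qed

lemma mat_adjoint_of_real_symmetric:
  assumes "A \<in> carrier_mat n n" "transpose_mat A = A"
  shows "mat_adjoint (map_mat complex_of_real A) = map_mat complex_of_real A"
  using assms by (intro eq_matI) (auto, metis carrier_matD index_transpose_mat(1))

lemma accretive_of_real_sym_psd:
  assumes "sym_psd_mat n A"
  shows "accretive_mat n (map_mat complex_of_real A)"
  using assms by (auto simp: accretive_mat_def sym_psd_mat_def Re_cscalar_prod_of_real_mat)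

lemma strictly_accretive_of_real_sym_pd:
  assumes A: "sym_pd_mat n A"
  shows "strictly_accretive_mat n (map_mat complex_of_real A)"
  unfolding strictly_accretive_mat_def
proof (intro ballI impI)
  fix u :: "complex vec"
  assume u: "u \<in> carrier_vec n" and "u \<noteq> 0\<^sub>v n"
  then have "map_vec Re u \<noteq> 0\<^sub>v n \<or> map_vec Im u \<noteq> 0\<^sub>v n"
    by (auto simp: vec_eq_iff complex_eq_iff)
  moreover have "0 \<le> map_vec Re u \<bullet> (A *\<^sub>v map_vec Re u)" "0 \<le> map_vec Im u \<bullet> (A *\<^sub>v map_vec Im u)"
    using sym_pd_mat_imp_sym_psd_mat[OF A] u by (simp_all add: sym_psd_mat_def)
  ultimately show "0 < Re ((map_mat complex_of_real A *\<^sub>v u) \<bullet>c u)"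
    using A u by (auto simp: sym_pd_mat_def Re_cscalar_prod_of_real_mat)
qed

lemma sq_norm_vec_shift_ge:
  assumes "H \<in> carrier_mat n n" "v \<in> carrier_vec n" "accretive_mat n H" "a \<ge> 0" "c \<ge> 0"
  shows "a\<^sup>2 * sq_norm_vec v \<le> sq_norm_vec ((complex_of_real a \<cdot>\<^sub>m 1\<^sub>m n + complex_of_real c \<cdot>\<^sub>m H) *\<^sub>v v)"
  using assms sq_norm_vec_nonneg[of "H *\<^sub>v v"]
  by (simp add: sq_norm_vec_shift accretive_mat_def)

lemma minv_correct:
  assumes B: "B \<in> carrier_mat n n"
    and inj: "\<And>v. v \<in> carrier_vec n \<Longrightarrow> B *\<^sub>v v = 0\<^sub>v n \<Longrightarrow> v = 0\<^sub>v n"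
  shows "B * minv B = 1\<^sub>m n" "minv B * B = 1\<^sub>m n" "minv B \<in> carrier_mat n n"
proof -
  have "det B \<noteq> 0"
    using det_0_iff_vec_prod_zero[OF B] inj by blast
  then have "B \<in> Units (ring_mat TYPE(complex) n ())"
    by (rule det_non_zero_imp_unit[OF B])
  then obtain B' where "mat_inverse B = Some B'"
    using mat_inverse(1)[OF B, where b="()"] by (cases "mat_inverse B") auto
  then show "B * minv B = 1\<^sub>m n" "minv B * B = 1\<^sub>m n" "minv B \<in> carrier_mat n n"
    using mat_inverse(2)[OF B] by (simp_all add: minv_def)
qed

lemma minv_shift_accretive:
  assumes H: "H \<in> carrier_mat n n" and acc: "accretive_mat n H" and "a > 0" "c \<ge> 0"
  defines "B \<equiv> complex_of_real a \<cdot>\<^sub>m 1\<^sub>m n + complex_of_real c \<cdot>\<^sub>m H"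
  shows "B * minv B = 1\<^sub>m n" "minv B * B = 1\<^sub>m n" "minv B \<in> carrier_mat n n"
proof -
  have "v = 0\<^sub>v n" if v: "v \<in> carrier_vec n" and Bv: "B *\<^sub>v v = 0\<^sub>v n" for v
  proof (rule ccontr)
    assume "v \<noteq> 0\<^sub>v n"
    then have "0 < a\<^sup>2 * sq_norm_vec v"
      using sq_norm_vec_pos[OF v] \<open>a > 0\<close> by simp
    also have "\<dots> \<le> sq_norm_vec (B *\<^sub>v v)"
      unfolding B_def using sq_norm_vec_shift_ge[OF H v acc] assms by simp
    finally show False
      by (simp add: Bv sq_norm_vec_def)
  qed
  moreover have "B \<in> carrier_mat n n"
    using H by (simp add: B_def)
  ultimately show "B * minv B = 1\<^sub>m n" "minv B * B = 1\<^sub>m n" "minv B \<in> carrier_mat n n"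
    using minv_correct by blast+
qed

section \<open>The splitting iteration\<close>

definition splitting_iteration_mat ::
    "nat \<Rightarrow> real \<Rightarrow> real \<Rightarrow> real \<Rightarrow> complex mat \<Rightarrow> complex mat \<Rightarrow> complex mat \<Rightarrow> complex mat" where
  "splitting_iteration_mat n a s t H1 H2 R =
     minv (complex_of_real a \<cdot>\<^sub>m 1\<^sub>m n + complex_of_real s \<cdot>\<^sub>m H2) *
     (complex_of_real a \<cdot>\<^sub>m 1\<^sub>m n + complex_of_real t \<cdot>\<^sub>m (R * H1)) *
     minv (complex_of_real a \<cdot>\<^sub>m 1\<^sub>m n + complex_of_real t \<cdot>\<^sub>m H1) *
     (complex_of_real a \<cdot>\<^sub>m 1\<^sub>m n - complex_of_real s \<cdot>\<^sub>m (R * H2))"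

locale skew_splitting =
  fixes n :: nat and H1 H2 R :: "complex mat"
  assumes carrier: "H1 \<in> carrier_mat n n" "H2 \<in> carrier_mat n n" "R \<in> carrier_mat n n"
    and R_skew: "mat_adjoint R = - R" and R_square: "R * R = - 1\<^sub>m n"
    and hermitian: "mat_adjoint H1 = H1" "mat_adjoint H2 = H2"
    and commute: "R * H1 = H1 * R" "R * H2 = H2 * R"
    and accretive: "accretive_mat n H1" "accretive_mat n H2"
begin

lemma energy_identity:
  assumes v: "v \<in> carrier_vec n" and w: "w \<in> carrier_vec n"
    and X: "(complex_of_real a \<cdot>\<^sub>m 1\<^sub>m n + complex_of_real t \<cdot>\<^sub>m (R * H1)) *\<^sub>v w
      = l \<cdot>\<^sub>v ((complex_of_real a \<cdot>\<^sub>m 1\<^sub>m n + complex_of_real s \<cdot>\<^sub>m H2) *\<^sub>v v)"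
    and Y: "(complex_of_real a \<cdot>\<^sub>m 1\<^sub>m n + complex_of_real t \<cdot>\<^sub>m H1) *\<^sub>v w
      = (complex_of_real a \<cdot>\<^sub>m 1\<^sub>m n + complex_of_real (- s) \<cdot>\<^sub>m (R * H2)) *\<^sub>v v"
  shows "(cmod l)\<^sup>2 * sq_norm_vec ((complex_of_real a \<cdot>\<^sub>m 1\<^sub>m n + complex_of_real s \<cdot>\<^sub>m H2) *\<^sub>v v)
    = sq_norm_vec ((complex_of_real a \<cdot>\<^sub>m 1\<^sub>m n + complex_of_real s \<cdot>\<^sub>m H2) *\<^sub>v v)
      - 2 * a * s * Re ((H2 *\<^sub>v v) \<bullet>c v) - 2 * a * t * Re ((H1 *\<^sub>v w) \<bullet>c w)"
proof -
  have "(cmod l)\<^sup>2 * sq_norm_vec ((complex_of_real a \<cdot>\<^sub>m 1\<^sub>m n + complex_of_real s \<cdot>\<^sub>m H2) *\<^sub>v v)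
      = a\<^sup>2 * sq_norm_vec w + t\<^sup>2 * sq_norm_vec (H1 *\<^sub>v w)"
    using sq_norm_vec_shift_skew[OF carrier(3,1) w R_skew R_square hermitian(1) commute(1), of a t]
    by (simp add: X sq_norm_vec_smult)
  moreover have "a\<^sup>2 * sq_norm_vec w + 2 * a * t * Re ((H1 *\<^sub>v w) \<bullet>c w) + t\<^sup>2 * sq_norm_vec (H1 *\<^sub>v w)
      = a\<^sup>2 * sq_norm_vec v + s\<^sup>2 * sq_norm_vec (H2 *\<^sub>v v)"
    using sq_norm_vec_shift[OF carrier(1) w, of a t]
      sq_norm_vec_shift_skew[OF carrier(3,2) v R_skew R_square hermitian(2) commute(2), of a "- s"]
    by (simp add: Y)
  ultimately show ?thesis
    by (simp add: sq_norm_vec_shift[OF carrier(2) v])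
qed

lemma splitting_iteration_eigenvector:
  assumes "a > 0" "s > 0" "t > 0" and v: "v \<in> carrier_vec n"
    and Pv: "splitting_iteration_mat n a s t H1 H2 R *\<^sub>v v = l \<cdot>\<^sub>v v"
  obtains w where "w \<in> carrier_vec n"
    "(complex_of_real a \<cdot>\<^sub>m 1\<^sub>m n + complex_of_real t \<cdot>\<^sub>m (R * H1)) *\<^sub>v w
      = l \<cdot>\<^sub>v ((complex_of_real a \<cdot>\<^sub>m 1\<^sub>m n + complex_of_real s \<cdot>\<^sub>m H2) *\<^sub>v v)"
    "(complex_of_real a \<cdot>\<^sub>m 1\<^sub>m n + complex_of_real t \<cdot>\<^sub>m H1) *\<^sub>v w
      = (complex_of_real a \<cdot>\<^sub>m 1\<^sub>m n + complex_of_real (- s) \<cdot>\<^sub>m (R * H2)) *\<^sub>v v"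
proof -
  define A where "A = complex_of_real a \<cdot>\<^sub>m 1\<^sub>m n + complex_of_real s \<cdot>\<^sub>m H2"
  define B where "B = complex_of_real a \<cdot>\<^sub>m 1\<^sub>m n + complex_of_real t \<cdot>\<^sub>m H1"
  define X where "X = complex_of_real a \<cdot>\<^sub>m 1\<^sub>m n + complex_of_real t \<cdot>\<^sub>m (R * H1)"
  define Y where "Y = complex_of_real a \<cdot>\<^sub>m 1\<^sub>m n + complex_of_real (- s) \<cdot>\<^sub>m (R * H2)"
  note A_inv = minv_shift_accretive[OF carrier(2) accretive(2) \<open>a > 0\<close> less_imp_le[OF \<open>s > 0\<close>], folded A_def]
  note B_inv = minv_shift_accretive[OF carrier(1) accretive(1) \<open>a > 0\<close> less_imp_le[OF \<open>t > 0\<close>], folded B_def]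
  have mats: "A \<in> carrier_mat n n" "B \<in> carrier_mat n n" "X \<in> carrier_mat n n" "Y \<in> carrier_mat n n"
    using carrier by (simp_all add: A_def B_def X_def Y_def)
  define u where "u = Y *\<^sub>v v"
  define w where "w = minv B *\<^sub>v u"
  have u: "u \<in> carrier_vec n" and w: "w \<in> carrier_vec n" and Xw: "X *\<^sub>v w \<in> carrier_vec n"
    using mats B_inv(3) v by (simp_all add: u_def w_def)
  have "splitting_iteration_mat n a s t H1 H2 R = minv A * X * minv B * Y"
    unfolding splitting_iteration_mat_def A_def B_def X_def Y_def
    using carrier by (intro arg_cong2[where f = "(*)"] refl eq_matI) auto
  also have "\<dots> *\<^sub>v v = minv A *\<^sub>v (X *\<^sub>v w)"
  proof -
    have AX: "minv A * X \<in> carrier_mat n n"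
      using mats A_inv(3) by simp
    show ?thesis
      unfolding assoc_mult_mat_vec[OF mult_carrier_mat[OF AX B_inv(3)] mats(4) v]
        assoc_mult_mat_vec[OF AX B_inv(3) u[unfolded u_def]] assoc_mult_mat_vec[OF A_inv(3) mats(3) w[unfolded w_def u_def]]
      by (simp add: w_def u_def)
  qed
  finally have "A *\<^sub>v (l \<cdot>\<^sub>v v) = (A * minv A) *\<^sub>v (X *\<^sub>v w)"
    using assoc_mult_mat_vec[OF mats(1) A_inv(3) Xw] Pv by simp
  then have "X *\<^sub>v w = l \<cdot>\<^sub>v (A *\<^sub>v v)"
    using A_inv(1) Xw mult_mat_vec[OF mats(1) v] by simp
  moreover have "B *\<^sub>v w = Y *\<^sub>v v"
    using assoc_mult_mat_vec[OF mats(2) B_inv(3) u] B_inv(1) u by (simp add: w_def u_def)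
  ultimately show ?thesis
    using that[OF w] by (simp add: A_def B_def X_def Y_def)
qed

lemma shift_skew_partner_nonzero:
  assumes "a > 0" and v: "v \<in> carrier_vec n" "v \<noteq> 0\<^sub>v n" and w: "w \<in> carrier_vec n"
    and Y: "(complex_of_real a \<cdot>\<^sub>m 1\<^sub>m n + complex_of_real t \<cdot>\<^sub>m H1) *\<^sub>v w
      = (complex_of_real a \<cdot>\<^sub>m 1\<^sub>m n + complex_of_real (- s) \<cdot>\<^sub>m (R * H2)) *\<^sub>v v"
  shows "w \<noteq> 0\<^sub>v n"
proof
  assume "w = 0\<^sub>v n"
  then have "(complex_of_real a \<cdot>\<^sub>m 1\<^sub>m n + complex_of_real t \<cdot>\<^sub>m H1) *\<^sub>v w = 0\<^sub>v n"
    using carrier(1) by (intro eq_vecI) (auto simp: scalar_prod_def)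
  then have "sq_norm_vec ((complex_of_real a \<cdot>\<^sub>m 1\<^sub>m n + complex_of_real (- s) \<cdot>\<^sub>m (R * H2)) *\<^sub>v v) = 0"
    using Y by (simp add: sq_norm_vec_def)
  then show False
    using sq_norm_vec_shift_skew_ge[OF carrier(3,2) v(1) R_skew R_square hermitian(2) commute(2), of a "- s"]
      sq_norm_vec_pos[OF v] \<open>a > 0\<close> by (smt (verit) mult_pos_pos zero_less_power)
qed

lemma splitting_iteration_mat_carrier:
  assumes "a > 0" "s \<ge> 0" "t \<ge> 0"
  shows "splitting_iteration_mat n a s t H1 H2 R \<in> carrier_mat n n"
  unfolding splitting_iteration_mat_def
  using carrier minv_shift_accretive(3)[OF carrier(1) accretive(1) \<open>a > 0\<close> \<open>t \<ge> 0\<close>]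
    minv_shift_accretive(3)[OF carrier(2) accretive(2) \<open>a > 0\<close> \<open>s \<ge> 0\<close>]
  by (intro mult_carrier_mat) auto

lemma eigenvalue_splitting_iteration_mat_lt_1:
  assumes strict: "strictly_accretive_mat n H1 \<or> strictly_accretive_mat n H2"
    and "a > 0" "s > 0" "t > 0"
    and "eigenvalue (splitting_iteration_mat n a s t H1 H2 R) l"
  shows "cmod l < 1"
proof -
  have P: "splitting_iteration_mat n a s t H1 H2 R \<in> carrier_mat n n"
    using splitting_iteration_mat_carrier assms(2-4) by simp
  obtain v where v: "v \<in> carrier_vec n" "v \<noteq> 0\<^sub>v n"
    and Pv: "splitting_iteration_mat n a s t H1 H2 R *\<^sub>v v = l \<cdot>\<^sub>v v"
    using assms(5) P unfolding eigenvalue_def eigenvector_def by auto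
  obtain w where w: "w \<in> carrier_vec n"
    and X: "(complex_of_real a \<cdot>\<^sub>m 1\<^sub>m n + complex_of_real t \<cdot>\<^sub>m (R * H1)) *\<^sub>v w
      = l \<cdot>\<^sub>v ((complex_of_real a \<cdot>\<^sub>m 1\<^sub>m n + complex_of_real s \<cdot>\<^sub>m H2) *\<^sub>v v)"
    and Y: "(complex_of_real a \<cdot>\<^sub>m 1\<^sub>m n + complex_of_real t \<cdot>\<^sub>m H1) *\<^sub>v w
      = (complex_of_real a \<cdot>\<^sub>m 1\<^sub>m n + complex_of_real (- s) \<cdot>\<^sub>m (R * H2)) *\<^sub>v v"
    using splitting_iteration_eigenvector[OF assms(2-4) v(1) Pv] by blast
  define N where "N = sq_norm_vec ((complex_of_real a \<cdot>\<^sub>m 1\<^sub>m n + complex_of_real s \<cdot>\<^sub>m H2) *\<^sub>v v)"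
  define p where "p = 2 * a * s * Re ((H2 *\<^sub>v v) \<bullet>c v)"
  define q where "q = 2 * a * t * Re ((H1 *\<^sub>v w) \<bullet>c w)"
  have N_pos: "0 < N"
    unfolding N_def using sq_norm_vec_pos[OF v] sq_norm_vec_shift_ge[OF carrier(2) v(1) accretive(2), of a s]
      assms(2,3) by (smt (verit) mult_pos_pos zero_less_power)
  have "w \<noteq> 0\<^sub>v n"
    using shift_skew_partner_nonzero[OF \<open>a > 0\<close> v w Y] .
  have "0 \<le> p" "0 \<le> q"
    using accretive v(1) w assms(2-4) by (simp_all add: p_def q_def accretive_mat_def)
  moreover have "0 < p \<or> 0 < q"
    using strict v \<open>w \<noteq> 0\<^sub>v n\<close> w assms(2-4) by (auto simp: p_def q_def strictly_accretive_mat_def)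
  ultimately have "(cmod l)\<^sup>2 * N < 1 * N"
    using energy_identity[OF v(1) w X Y, folded N_def p_def q_def] by linarith
  then have "(cmod l)\<^sup>2 < 1\<^sup>2"
    using N_pos by simp
  then show ?thesis
    by (rule power_less_imp_less_base) simp
qed

lemma spectral_radius_splitting_iteration_mat_lt_1:
  assumes "n > 0" "strictly_accretive_mat n H1 \<or> strictly_accretive_mat n H2"
    and "a > 0" "s > 0" "t > 0"
  shows "spectral_radius (splitting_iteration_mat n a s t H1 H2 R) < 1"
proof -
  have P: "splitting_iteration_mat n a s t H1 H2 R \<in> carrier_mat n n"
    using splitting_iteration_mat_carrier assms(3-5) by simp
  obtain l where "eigenvalue (splitting_iteration_mat n a s t H1 H2 R) l"
      "spectral_radius (splitting_iteration_mat n a s t H1 H2 R) = cmod l"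
    using spectral_radius_mem_max(1)[OF P \<open>n > 0\<close>] unfolding spectrum_def by auto
  then show ?thesis
    using eigenvalue_splitting_iteration_mat_lt_1[OF assms(2-5)] by simp
qed

end

section \<open>The matrices of the MBAS method\<close>

lemma zero_mult_vec: "x \<in> carrier_vec nc \<Longrightarrow> 0\<^sub>m nr nc *\<^sub>v x = (0\<^sub>v nr :: 'a :: semiring_0 vec)"
  by (rule eq_vecI) (auto simp: scalar_prod_def)

lemma block_diag_quadratic_form:
  assumes K: "(K :: real mat) \<in> carrier_mat m m" and p: "p \<in> carrier_vec (m + m)"
  shows "p \<bullet> (four_block_mat K (0\<^sub>m m m) (0\<^sub>m m m) K *\<^sub>v p)
    = vec_first p m \<bullet> (K *\<^sub>v vec_first p m) + vec_last p m \<bullet> (K *\<^sub>v vec_last p m)"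
proof -
  have split: "p = vec_first p m @\<^sub>v vec_last p m"
    using p by simp
  show ?thesis
    apply (subst (1 2) split)
    apply (subst four_block_mat_mult_vec[OF K zero_carrier_mat zero_carrier_mat K vec_first_carrier vec_last_carrier])
    apply (subst scalar_prod_append[of _ m _ m])
    using K by (auto simp: zero_mult_vec)
qed

lemma sym_psd_mat_block_diag:
  assumes "sym_psd_mat m K"
  shows "sym_psd_mat (2 * m) (four_block_mat K (0\<^sub>m m m) (0\<^sub>m m m) K)"
proof -
  have K: "K \<in> carrier_mat m m" "transpose_mat K = K" "\<And>x. x \<in> carrier_vec m \<Longrightarrow> 0 \<le> x \<bullet> (K *\<^sub>v x)"
    using assms by (auto simp: sym_psd_mat_def)
  then show ?thesis
    by (auto simp: sym_psd_mat_def mult_2 block_diag_quadratic_form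
        transpose_four_block_mat[OF K(1) zero_carrier_mat zero_carrier_mat K(1)])
qed

lemma sym_pd_mat_block_diag:
  assumes "sym_pd_mat m K"
  shows "sym_pd_mat (2 * m) (four_block_mat K (0\<^sub>m m m) (0\<^sub>m m m) K)"
proof -
  have K: "K \<in> carrier_mat m m" "\<And>x. x \<in> carrier_vec m \<Longrightarrow> x \<noteq> 0\<^sub>v m \<Longrightarrow> 0 < x \<bullet> (K *\<^sub>v x)"
    using assms by (auto simp: sym_pd_mat_def)
  have psd: "\<And>x. x \<in> carrier_vec m \<Longrightarrow> 0 \<le> x \<bullet> (K *\<^sub>v x)"
    using sym_pd_mat_imp_sym_psd_mat[OF assms] by (simp add: sym_psd_mat_def)
  have "0 < p \<bullet> (four_block_mat K (0\<^sub>m m m) (0\<^sub>m m m) K *\<^sub>v p)"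
    if p: "p \<in> carrier_vec (m + m)" "p \<noteq> 0\<^sub>v (m + m)" for p
  proof -
    have "vec_first p m \<noteq> 0\<^sub>v m \<or> vec_last p m \<noteq> 0\<^sub>v m"
    proof (rule ccontr)
      assume "\<not> ?thesis"
      then have "p = 0\<^sub>v m @\<^sub>v 0\<^sub>v m"
        using vec_first_last_append[OF p(1)] by simp
      also have "\<dots> = 0\<^sub>v (m + m)"
        by (rule eq_vecI) auto
      finally show False
        using p(2) by simp
    qed
    then show ?thesis
      using K psd[of "vec_first p m"] psd[of "vec_last p m"] K(2)[of "vec_first p m"] K(2)[of "vec_last p m"]
      by (auto simp: block_diag_quadratic_form[OF K(1) p(1)] add_pos_nonneg add_nonneg_pos)
  qed
  then show ?thesis
    using sym_pd_mat_imp_sym_psd_mat[OF assms] sym_psd_mat_block_diag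
    by (auto simp: sym_pd_mat_def sym_psd_mat_def mult_2)
qed

lemma blkdiag_eq_of_real_mat:
  "K \<in> carrier_mat m m \<Longrightarrow>
    blkdiag m K = map_mat complex_of_real (four_block_mat K (0\<^sub>m m m) (0\<^sub>m m m) K)"
  by (rule eq_matI) (auto simp: blkdiag_def)

lemma blkdiag_carrier: "K \<in> carrier_mat m m \<Longrightarrow> blkdiag m K \<in> carrier_mat (2 * m) (2 * m)"
  by (simp add: blkdiag_def mult_2)

lemma mat_adjoint_blkdiag:
  assumes "sym_psd_mat m K"
  shows "mat_adjoint (blkdiag m K) = blkdiag m K"
proof -
  have K: "K \<in> carrier_mat m m"
    using assms by (simp add: sym_psd_mat_def)
  show ?thesis
    using sym_psd_mat_block_diag[OF assms] unfolding blkdiag_eq_of_real_mat[OF K] sym_psd_mat_def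
    by (blast intro: mat_adjoint_of_real_symmetric)
qed

lemma accretive_blkdiag: "sym_psd_mat m K \<Longrightarrow> accretive_mat (2 * m) (blkdiag m K)"
  using accretive_of_real_sym_psd[OF sym_psd_mat_block_diag]
  by (simp add: blkdiag_eq_of_real_mat sym_psd_mat_def)

lemma strictly_accretive_blkdiag: "sym_pd_mat m K \<Longrightarrow> strictly_accretive_mat (2 * m) (blkdiag m K)"
  using strictly_accretive_of_real_sym_pd[OF sym_pd_mat_block_diag]
  by (simp add: blkdiag_eq_of_real_mat sym_pd_mat_def)

definition skew_block :: "nat \<Rightarrow> real \<Rightarrow> real \<Rightarrow> complex mat" where
  "skew_block m r q = four_block_mat
     ((\<i> * complex_of_real r) \<cdot>\<^sub>m 1\<^sub>m m) (complex_of_real q \<cdot>\<^sub>m 1\<^sub>m m)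
     ((- complex_of_real q) \<cdot>\<^sub>m 1\<^sub>m m) ((- \<i> * complex_of_real r) \<cdot>\<^sub>m 1\<^sub>m m)"

lemma skew_block_carrier: "skew_block m r q \<in> carrier_mat (2 * m) (2 * m)"
  by (simp add: skew_block_def mult_2)

lemma mat_adjoint_skew_block: "mat_adjoint (skew_block m r q) = - skew_block m r q"
  by (rule eq_matI) (auto simp: skew_block_def)

lemma skew_block_square:
  assumes "r\<^sup>2 + q\<^sup>2 = 1"
  shows "skew_block m r q * skew_block m r q = - 1\<^sub>m (2 * m)"
proof -
  have "(\<i> * complex_of_real r) * (\<i> * complex_of_real r) - complex_of_real q * complex_of_real q = - 1"
    using assms by (simp add: algebra_simps power2_eq_square flip: of_real_mult of_real_add)
  then show ?thesis
    unfolding skew_block_def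
    using smult_carrier_mat[OF one_carrier_mat, of _ m]
    by (subst mult_four_block_mat) (auto intro!: eq_matI simp: mult_2 algebra_simps)
qed

lemma skew_block_commute:
  assumes "A \<in> carrier_mat m m"
  shows "skew_block m r q * four_block_mat A (0\<^sub>m m m) (0\<^sub>m m m) A
    = four_block_mat A (0\<^sub>m m m) (0\<^sub>m m m) A * skew_block m r q"
  unfolding skew_block_def using assms smult_carrier_mat[OF one_carrier_mat, of _ m]
  by (subst (1 2) mult_four_block_mat) (auto simp: mult_smult_assoc_mat[OF one_carrier_mat assms] mult_smult_distrib[OF assms one_carrier_mat])

lemma Rmat_eq_skew_block:
  assumes "\<nu> > 0"
  obtains r q where "Rmat m \<nu> \<omega> = skew_block m r q" "r\<^sup>2 + q\<^sup>2 = 1"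
proof
  define c where "c = 1 / sqrt (\<nu> * theta \<nu> \<omega>)"
  have \<theta>: "\<nu> * theta \<nu> \<omega> = \<omega>\<^sup>2 * \<nu>\<^sup>2 + \<nu>" "\<nu> * theta \<nu> \<omega> > 0"
    using assms by (simp_all add: theta_def algebra_simps power2_eq_square add_pos_nonneg)
  show "Rmat m \<nu> \<omega> = skew_block m (- (c * \<omega> * \<nu>)) (c * sqrt \<nu>)"
    by (rule eq_matI) (auto simp: Rmat_def skew_block_def c_def)
  have "(- (c * \<omega> * \<nu>))\<^sup>2 + (c * sqrt \<nu>)\<^sup>2 = (\<omega>\<^sup>2 * \<nu>\<^sup>2 + \<nu>) / (\<nu> * theta \<nu> \<omega>)"
    using \<theta>(2) assms by (simp add: c_def power_mult_distrib power_divide add_divide_distrib)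
  then show "(- (c * \<omega> * \<nu>))\<^sup>2 + (c * sqrt \<nu>)\<^sup>2 = 1"
    using \<theta> by simp
qed

lemma skew_splitting_blkdiag_Rmat:
  assumes "\<nu> > 0" "sym_psd_mat m M" "sym_psd_mat m K"
  shows "skew_splitting (2 * m) (blkdiag m M) (blkdiag m K) (Rmat m \<nu> \<omega>)"
proof -
  obtain r q where R: "Rmat m \<nu> \<omega> = skew_block m r q" "r\<^sup>2 + q\<^sup>2 = 1"
    using Rmat_eq_skew_block[OF assms(1)] .
  have "skew_block m r q * blkdiag m A = blkdiag m A * skew_block m r q" if "A \<in> carrier_mat m m" for A
    unfolding blkdiag_def using that by (intro skew_block_commute) simp
  then show ?thesis
    unfolding skew_splitting_def R(1)
    using assms(2,3) blkdiag_carrier mat_adjoint_blkdiag accretive_blkdiag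
      skew_block_carrier mat_adjoint_skew_block skew_block_square[OF R(2)]
    by (simp add: sym_psd_mat_def)
qed

theorem mainTheorem3:
  fixes m :: nat and M K :: "real mat" and \<nu> \<omega> :: real
  assumes "m \<ge> 1"
    and "\<nu> > 0" and "\<omega> > 0"
    and "sym_psd_mat m M" and "sym_psd_mat m K"
    and "sym_pd_mat m M \<or> sym_pd_mat m K"
  shows "\<forall>\<alpha>>0. spectral_radius (Palpha m \<nu> \<omega> M K \<alpha>) < 1"
proof (intro allI impI)
  fix \<alpha> :: real
  assume "\<alpha> > 0"
  interpret skew_splitting "2 * m" "blkdiag m M" "blkdiag m K" "Rmat m \<nu> \<omega>"
    using skew_splitting_blkdiag_Rmat[OF assms(2,4,5)] .
  have "theta \<nu> \<omega> > 0"
    using assms(2) by (simp add: theta_def add_pos_nonneg)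
  then have "spectral_radius (splitting_iteration_mat (2 * m) \<alpha> (sqrt (\<nu> * theta \<nu> \<omega>)) (theta \<nu> \<omega>)
      (blkdiag m M) (blkdiag m K) (Rmat m \<nu> \<omega>)) < 1"
    using assms(1,2,6) \<open>\<alpha> > 0\<close> strictly_accretive_blkdiag
    by (intro spectral_radius_splitting_iteration_mat_lt_1) auto
  then show "spectral_radius (Palpha m \<nu> \<omega> M K \<alpha>) < 1"
    by (simp add: Palpha_def splitting_iteration_mat_def Let_def)
qed

end
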